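(* Let $R$ and $S$ be two disjoint geometric trees in the plane whose vertices are in general position. Then their convex hulls $\mathrm{Conv}(R)$ and $\mathrm{Conv}(S)$ form a weakly disjoint pair.
   Context: A geometric tree is a plane straight-line embedding of a tree in $\mathbb{R}^2$, viewed as a subset of $\mathbb{R}^2$; disjoint means disjoint as point sets. Two convex polygons $P,Q$ form a weakly disjoint pair if $P\setminus Q$ and $Q\setminus P$ are both connected sets and $P$ and $Q$ share no vertex. The convex hull of a line segment is regarded as a valid degenerate convex polygon with two edges. *)

theory Defs
  imports "HOL-Analysis.Analysis"
begin

type_synonym pt = "real^2"

definition edge_rel :: "'a set set \<Rightarrow> ('a \<times> 'a) set" where
  "edge_rel E = {(a,b). {a,b} \<in> E}"

definition graph_connected :: "'a set \<Rightarrow> 'a set set \<Rightarrow> bool" where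
  "graph_connected V E \<longleftrightarrow> (\<forall>a\<in>V. \<forall>b\<in>V. (a,b) \<in> (edge_rel E)\<^sup>*)"

definition has_cycle :: "'a set set \<Rightarrow> bool" where
  "has_cycle E \<longleftrightarrow> (\<exists>vs. length vs \<ge> 3 \<and> distinct vs \<and>
      (\<forall>i < length vs. {vs ! i, vs ! ((i + 1) mod length vs)} \<in> E))"

definition is_tree :: "'a set \<Rightarrow> 'a set set \<Rightarrow> bool" where
  "is_tree V E \<longleftrightarrow> finite V \<and> V \<noteq> {} \<and>
     E \<subseteq> {{a,b} | a b. a \<in> V \<and> b \<in> V \<and> a \<noteq> b} \<and>
     graph_connected V E \<and> \<not> has_cycle E"

definition plane_straight_line :: "pt set \<Rightarrow> pt set set \<Rightarrow> bool" where
  "plane_straight_line V E \<longleftrightarrow>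
     (\<forall>e1\<in>E. \<forall>e2\<in>E. e1 \<noteq> e2 \<longrightarrow> convex hull e1 \<inter> convex hull e2 = e1 \<inter> e2) \<and>
     (\<forall>v\<in>V. \<forall>e\<in>E. v \<in> convex hull e \<longrightarrow> v \<in> e)"

definition geometric_tree :: "pt set \<Rightarrow> pt set set \<Rightarrow> bool" where
  "geometric_tree V E \<longleftrightarrow> is_tree V E \<and> plane_straight_line V E"

definition tree_points :: "pt set \<Rightarrow> pt set set \<Rightarrow> pt set" where
  "tree_points V E = V \<union> (\<Union>e\<in>E. convex hull e)"

definition general_position :: "pt set \<Rightarrow> bool" where
  "general_position P \<longleftrightarrow>
     (\<forall>a\<in>P. \<forall>b\<in>P. \<forall>c\<in>P. a \<noteq> b \<and> a \<noteq> c \<and> b \<noteq> c \<longrightarrow> \<not> collinear {a,b,c})"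

text \<open>Vertices of a (possibly degenerate) convex polygon are its extreme points.\<close>
definition weakly_disjoint_pair :: "pt set \<Rightarrow> pt set \<Rightarrow> bool" where
  "weakly_disjoint_pair P Q \<longleftrightarrow> connected (P - Q) \<and> connected (Q - P) \<and>
     \<not> (\<exists>v. v extreme_point_of P \<and> v extreme_point_of Q)"

end

theory Submission
  imports Defs
begin

text \<open>
  Write \<open>h\<^sub>X\<close> for the support function of a compact set \<open>X\<close> in direction \<open>t\<close>. For disjoint
  compact path-connected sets \<open>R\<close>, \<open>S\<close>, the sign of \<open>h\<^sub>R - h\<^sub>S\<close> cannot change four times
  around the circle: by the Fashoda meet theorem, a pattern forcing \<open>R\<close> to span a strip
  that \<open>S\<close> has to cross would make the two sets meet. Hence the directions in which \<open>R\<close>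
  sticks out of \<open>conv S\<close> form an arc. Every point of \<open>conv R - conv S\<close> lies in a convex
  cap \<open>{p \<in> conv R. h\<^sub>S t < p \<bullet> dir t}\<close> for such a direction \<open>t\<close>, and caps of nearby directions
  share an extreme point of \<open>R\<close>, so sliding \<open>t\<close> along the arc connects any two points.
  Extreme points of the hulls lie in the disjoint trees, so none is shared.
\<close>

lemma fashoda_strip_crossing:
  fixes R S :: "(real^2) set"
  assumes "path_connected R" and "path_connected S" and "R \<inter> S = {}"
    and r_left: "r_left \<in> R" and r_right: "r_right \<in> R"
    and R_strip: "\<forall>r\<in>R. r_left$1 \<le> r$1 \<and> r$1 \<le> r_right$1"
    and S_strip: "\<forall>s\<in>S. r_left$1 \<le> s$1 \<and> s$1 \<le> r_right$1"
    and s_top: "s_top \<in> S" and top: "\<forall>z\<in>R\<union>S. z$2 \<le> s_top$2"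
    and s_low: "s_low \<in> S" and "\<beta> < 0"
    and sep: "\<forall>r\<in>R. \<alpha> * r$1 + \<beta> * r$2 \<le> \<alpha> * s_low$1 + \<beta> * s_low$2"
    and bottom: "\<forall>z\<in>R\<union>S. L \<le> z$2"
  shows False
proof -
  obtain f where f: "path f" "path_image f \<subseteq> R" "pathstart f = r_left" "pathfinish f = r_right"
    using assms(1) r_left r_right unfolding path_connected_def by blast
  obtain g2 where g2: "path g2" "path_image g2 \<subseteq> S" "pathstart g2 = s_low" "pathfinish g2 = s_top"
    using assms(2) s_low s_top unfolding path_connected_def by blast
  \<comment> \<open>By \<open>sep\<close> and \<open>\<beta> < 0\<close>, the vertical segment from the bottom to \<open>s_low\<close> misses \<open>R\<close>.\<close>
  define w :: "real^2" where "w = vector [s_low$1, L]"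
  define g where "g = linepath w s_low +++ g2"
  define a :: "real^2" where "a = vector [r_left$1, L]"
  define b :: "real^2" where "b = vector [r_right$1, s_top$2]"
  have in_box: "z \<in> cbox a b" if "z \<in> R \<union> S" for z
    using that R_strip S_strip top bottom by (auto simp: mem_box_cart a_def b_def forall_2)
  have "w \<in> cbox a b"
    using S_strip s_low s_top bottom by (auto simp: mem_box_cart a_def b_def w_def forall_2)
  then have seg_box: "closed_segment w s_low \<subseteq> cbox a b"
    using in_box[of s_low] s_low by (simp add: closed_segment_subset convex_box)
  have path_image_g: "path_image g = closed_segment w s_low \<union> path_image g2"
    using g2 by (simp add: g_def path_image_join)
  obtain z where zf: "z \<in> path_image f" and zg: "z \<in> path_image g"
  proof (rule fashoda[of f g a b])
    show "path f" "path g" using f(1) g2 by (simp_all add: g_def)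
    show "path_image f \<subseteq> cbox a b" using f(2) in_box by blast
    show "path_image g \<subseteq> cbox a b" using path_image_g seg_box g2(2) in_box by blast
    show "pathstart f $ 1 = a $ 1" "pathfinish f $ 1 = b $ 1"
      using f by (simp_all add: a_def b_def)
    show "pathstart g $ 2 = a $ 2" "pathfinish g $ 2 = b $ 2"
      using g2 by (simp_all add: g_def a_def b_def w_def)
  qed
  have zR: "z \<in> R" using zf f by blast
  then have "z \<in> closed_segment w s_low" "z \<noteq> s_low"
    using zg path_image_g g2(2) assms(3) s_low by auto
  then obtain u where u: "0 \<le> u" "u \<le> 1" "z = (1 - u) *\<^sub>R w + u *\<^sub>R s_low"
    unfolding in_segment by blast
  have z1: "z$1 = s_low$1" using arg_cong[OF u(3), of "\<lambda>v. v$1"] by (simp add: w_def algebra_simps)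
  have z2: "z$2 = (1 - u) * L + u * s_low$2" using u by (simp add: w_def)
  have "(1 - u) * L \<le> (1 - u) * s_low$2" using bottom s_low u by (simp add: mult_left_mono)
  then have "z$2 \<le> s_low$2" using z2 by (simp add: algebra_simps)
  moreover have "z$2 \<noteq> s_low$2" using z1 \<open>z \<noteq> s_low\<close> by (auto simp: vec_eq_iff forall_2)
  ultimately have "\<beta> * z$2 > \<beta> * s_low$2" using \<open>\<beta> < 0\<close> by (simp add: mult_less_cancel_left_neg)
  then show False using sep zR z1 by force
qed

definition dir :: "real \<Rightarrow> real^2" where
  "dir t = vector [cos t, sin t]"

lemma inner_dir: "x \<bullet> dir t = x$1 * cos t + x$2 * sin t"
  by (simp add: dir_def inner_vec_def sum_2)

lemma dir_add_pi: "dir (t + pi) = - dir t"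
  by (simp add: dir_def vec_eq_iff forall_2)

lemma dir_add_int_2pi: "dir (t + 2*pi * of_int n) = dir t"
  by (simp add: dir_def vec_eq_iff forall_2 cos_add sin_add)

lemma inner_dir_sin_combination:
  "x \<bullet> dir v * sin (u - t) = sin (u - v) * (x \<bullet> dir t) + sin (v - t) * (x \<bullet> dir u)"
  by (simp add: inner_dir sin_diff algebra_simps)

lemma inner_dir_eq_imp_eq:
  assumes "x \<bullet> dir t = y \<bullet> dir t" "x \<bullet> dir u = y \<bullet> dir u" "sin (u - t) \<noteq> 0"
  shows "x = y"
proof -
  have "(x - y) \<bullet> dir v * sin (u - t) = 0" for v
    using inner_dir_sin_combination[of "x - y" v u t] assms(1,2) by (simp add: inner_diff_left)
  then have "(x - y) \<bullet> dir 0 = 0" "(x - y) \<bullet> dir (pi/2) = 0"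
    using assms(3) by simp_all
  then show ?thesis by (simp add: inner_dir vec_eq_iff forall_2)
qed

lemma polar_dir:
  fixes w :: "real^2"
  assumes "w \<noteq> 0"
  obtains t where "w = norm w *\<^sub>R dir t"
proof -
  have n: "norm w > 0" using assms by simp
  have "(w$1)^2 + (w$2)^2 = (norm w)^2"
    by (simp add: norm_vec_def L2_set_def sum_2)
  then have "(w$1 / norm w)^2 + (w$2 / norm w)^2 = 1"
    using n by (simp add: power_divide add_divide_distrib[symmetric])
  then obtain t where "w$1 / norm w = cos t" "w$2 / norm w = sin t"
    using sincos_total_2pi by metis
  then have "w$1 = norm w * cos t" "w$2 = norm w * sin t"
    using n by (simp_all add: field_simps)
  then have "w = norm w *\<^sub>R dir t"
    by (simp add: dir_def vec_eq_iff forall_2)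
  then show thesis by (rule that)
qed

definition support_fun :: "(real^2) set \<Rightarrow> real \<Rightarrow> real" where
  "support_fun X t = Sup ((\<lambda>x. x \<bullet> dir t) ` X)"

lemma support_fun_add_int_2pi: "support_fun X (t + 2*pi * of_int n) = support_fun X t"
  by (simp add: support_fun_def dir_add_int_2pi)

lemma support_fun_add_2pi: "support_fun X (t + 2*pi) = support_fun X t"
  using support_fun_add_int_2pi[of X t 1] by simp

lemma compact_image_inner_dir: "compact X \<Longrightarrow> compact ((\<lambda>x. x \<bullet> dir t) ` X)"
  by (intro compact_continuous_image continuous_intros)

lemma support_fun_upper: "compact X \<Longrightarrow> x \<in> X \<Longrightarrow> x \<bullet> dir t \<le> support_fun X t"
  unfolding support_fun_def
  by (intro cSup_upper imageI bounded_imp_bdd_above compact_imp_bounded compact_image_inner_dir)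

lemma support_fun_attained:
  assumes "compact X" "X \<noteq> {}"
  obtains x where "x \<in> X" "x \<bullet> dir t = support_fun X t"
proof -
  obtain m where m: "m \<in> (\<lambda>x. x \<bullet> dir t) ` X" "\<forall>y\<in>(\<lambda>x. x \<bullet> dir t) ` X. y \<le> m"
    using compact_attains_sup[OF compact_image_inner_dir[OF assms(1)]] assms(2) by blast
  then have "support_fun X t = m" unfolding support_fun_def by (intro cSup_eq_maximum) auto
  then show thesis using m that by auto
qed

lemma convex_hull_le_support_fun:
  assumes "compact X" "p \<in> convex hull X"
  shows "p \<bullet> dir t \<le> support_fun X t"
proof -
  have "convex hull X \<subseteq> {y. dir t \<bullet> y \<le> support_fun X t}"
    using support_fun_upper[OF assms(1)]
    by (intro hull_minimal convex_halfspace_le) (auto simp: inner_commute)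
  then show ?thesis using assms(2) by (auto simp: inner_commute)
qed

lemma support_fun_diff_le:
  assumes "compact X" "X \<noteq> {}" "\<forall>x\<in>X. norm x \<le> B"
  shows "support_fun X t - support_fun X s \<le> B * (\<bar>cos t - cos s\<bar> + \<bar>sin t - sin s\<bar>)"
proof -
  obtain x where x: "x \<in> X" "x \<bullet> dir t = support_fun X t"
    using support_fun_attained[OF assms(1,2)] by blast
  have "\<bar>x$1\<bar> \<le> B" "\<bar>x$2\<bar> \<le> B"
    using component_le_norm_cart[of x] assms(3) x(1) by (meson order_trans)+
  then have "\<bar>x$1\<bar> * \<bar>cos t - cos s\<bar> + \<bar>x$2\<bar> * \<bar>sin t - sin s\<bar>
      \<le> B * (\<bar>cos t - cos s\<bar> + \<bar>sin t - sin s\<bar>)"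
    by (simp add: distrib_left add_mono mult_right_mono)
  moreover have "x \<bullet> dir t - x \<bullet> dir s
      \<le> \<bar>x$1\<bar> * \<bar>cos t - cos s\<bar> + \<bar>x$2\<bar> * \<bar>sin t - sin s\<bar>"
  proof -
    have "x \<bullet> dir t - x \<bullet> dir s = x$1 * (cos t - cos s) + x$2 * (sin t - sin s)"
      by (simp add: inner_dir algebra_simps)
    then show ?thesis by (metis abs_ge_self abs_mult add_mono)
  qed
  moreover have "x \<bullet> dir s \<le> support_fun X s" by (rule support_fun_upper[OF assms(1) x(1)])
  ultimately show ?thesis using x by linarith
qed

lemma continuous_on_support_fun:
  assumes "compact X" "X \<noteq> {}"
  shows "continuous_on A (support_fun X)"
proof -
  obtain B where B: "\<forall>x\<in>X. norm x \<le> B"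
    using compact_imp_bounded[OF assms(1)] bounded_iff by metis
  have "isCont (support_fun X) t0" for t0
  proof -
    let ?bound = "\<lambda>s. B * (\<bar>cos s - cos t0\<bar> + \<bar>sin s - sin t0\<bar>)"
    have "(?bound \<longlongrightarrow> ?bound t0) (at t0)"
      by (intro tendsto_intros)
    then have bound_lim: "(?bound \<longlongrightarrow> 0) (at t0)" by simp
    have "norm (support_fun X s - support_fun X t0) \<le> ?bound s" for s
      using support_fun_diff_le[OF assms B, of s t0] support_fun_diff_le[OF assms B, of t0 s]
      by (simp add: abs_le_iff abs_minus_commute)
    then have "((\<lambda>s. support_fun X s - support_fun X t0) \<longlongrightarrow> 0) (at t0)"
      by (intro Lim_null_comparison[OF _ bound_lim] always_eventually) auto
    then show ?thesis unfolding isCont_def by (simp add: LIM_zero_iff)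
  qed
  then show ?thesis by (simp add: continuous_at_imp_continuous_on)
qed

lemma support_fun_crossing_impossible:
  fixes R S :: "(real^2) set"
  assumes cR: "compact R" and cS: "compact S" and "R \<noteq> {}" and "S \<noteq> {}"
    and "path_connected R" and "path_connected S" and "R \<inter> S = {}"
    and ht: "support_fun S t \<le> support_fun R t"
    and ht_pi: "support_fun S (t + pi) \<le> support_fun R (t + pi)"
    and u: "t < u" "u < t + pi" and hu: "support_fun R u \<le> support_fun S u"
    and v: "t + pi < v" "v < t + 2*pi" and hv: "support_fun R v \<le> support_fun S v"
  shows False
proof -
  \<comment> \<open>In the coordinates \<open>(x \<bullet> dir t, x \<bullet> dir u)\<close>, \<open>R\<close> spans a vertical strip containing
    \<open>S\<close>, \<open>S\<close> reaches the top, and \<open>R\<close> lies behind the support line of \<open>S\<close> in direction \<open>v\<close>.\<close>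
  define T where "T x = (vector [x \<bullet> dir t, x \<bullet> dir u] :: real^2)" for x
  have T1: "(T x)$1 = x \<bullet> dir t" and T2: "(T x)$2 = x \<bullet> dir u" for x
    by (simp_all add: T_def)
  have "linear T"
    by (rule linearI) (simp_all add: T_def vec_eq_iff forall_2 inner_add_left)
  then have contT: "continuous_on A T" for A
    by (simp add: linear_continuous_on linear_conv_bounded_linear)
  have sin_ut: "sin (u - t) > 0" using u by (intro sin_gt_zero) auto
  have "sin (v - t - pi) > 0" using v by (intro sin_gt_zero) auto
  then have sin_vt: "sin (v - t) < 0" by (simp add: sin_diff)
  have "inj T"
    using sin_ut by (intro injI inner_dir_eq_imp_eq[of _ t _ u]) (auto simp: T_def vec_eq_iff forall_2)
  have inner_dir_pi: "x \<bullet> dir (t + pi) = - (x \<bullet> dir t)" for x by (simp add: dir_add_pi)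
  obtain r_right where r_right: "r_right \<in> R" "r_right \<bullet> dir t = support_fun R t"
    using support_fun_attained[OF cR \<open>R \<noteq> {}\<close>] .
  obtain r_left where r_left: "r_left \<in> R" "r_left \<bullet> dir (t + pi) = support_fun R (t + pi)"
    using support_fun_attained[OF cR \<open>R \<noteq> {}\<close>] .
  obtain s_top where s_top: "s_top \<in> S" "s_top \<bullet> dir u = support_fun S u"
    using support_fun_attained[OF cS \<open>S \<noteq> {}\<close>] .
  obtain s_low where s_low: "s_low \<in> S" "s_low \<bullet> dir v = support_fun S v"
    using support_fun_attained[OF cS \<open>S \<noteq> {}\<close>] .
  have "compact (T ` (R \<union> S))"
    using cR cS by (intro compact_continuous_image contT) auto
  then obtain B where B: "\<forall>z\<in>T ` (R \<union> S). norm z \<le> B"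
    using compact_imp_bounded bounded_iff by metis
  define \<alpha> where "\<alpha> = sin (u - v) / sin (u - t)"
  define \<beta> where "\<beta> = sin (v - t) / sin (u - t)"
  have inner_dir_v: "x \<bullet> dir v = \<alpha> * (T x)$1 + \<beta> * (T x)$2" for x
  proof -
    have "x \<bullet> dir v = (x \<bullet> dir v * sin (u - t)) / sin (u - t)" using sin_ut by simp
    also have "\<dots> = \<alpha> * (T x)$1 + \<beta> * (T x)$2"
      unfolding inner_dir_sin_combination T1 T2 \<alpha>_def \<beta>_def by (simp add: add_divide_distrib)
    finally show ?thesis .
  qed
  show False
  proof (rule fashoda_strip_crossing[of "T ` R" "T ` S" "T r_left" "T r_right" "T s_top" "T s_low" \<beta> \<alpha> "-B"])
    show "path_connected (T ` R)" "path_connected (T ` S)"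
      using assms(5,6) by (auto intro: path_connected_continuous_image contT)
    show "T ` R \<inter> T ` S = {}" using assms(7) \<open>inj T\<close> by (auto dest: injD)
    show "T r_left \<in> T ` R" "T r_right \<in> T ` R" "T s_top \<in> T ` S" "T s_low \<in> T ` S"
      using r_right r_left s_top s_low by auto
    show "\<forall>r\<in>T ` R. T r_left $ 1 \<le> r $ 1 \<and> r $ 1 \<le> T r_right $ 1"
      using r_right r_left support_fun_upper[OF cR, of _ "t + pi"] support_fun_upper[OF cR, of _ t]
      by (fastforce simp: T1 inner_dir_pi)
    show "\<forall>r\<in>T ` S. T r_left $ 1 \<le> r $ 1 \<and> r $ 1 \<le> T r_right $ 1"
      using r_right r_left support_fun_upper[OF cS, of _ "t + pi"] support_fun_upper[OF cS, of _ t] ht ht_pi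
      by (fastforce simp: T1 inner_dir_pi)
    show "\<forall>z\<in>T ` R \<union> T ` S. z $ 2 \<le> T s_top $ 2"
      using s_top support_fun_upper[OF cS, of _ u] support_fun_upper[OF cR, of _ u] hu
      by (fastforce simp: T2)
    show "\<beta> < 0" using sin_ut sin_vt by (simp add: \<beta>_def divide_neg_pos)
    show "\<forall>r\<in>T ` R. \<alpha> * r $ 1 + \<beta> * r $ 2 \<le> \<alpha> * T s_low $ 1 + \<beta> * T s_low $ 2"
      using s_low support_fun_upper[OF cR, of _ v] hv by (fastforce simp: inner_dir_v[symmetric])
    show "\<forall>z\<in>T ` R \<union> T ` S. - B \<le> z $ 2"
    proof
      fix z assume "z \<in> T ` R \<union> T ` S"
      then have "norm z \<le> B" using B by blast
      then have "\<bar>z$2\<bar> \<le> B" using component_le_norm_cart[of z 2] by linarith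
      then show "- B \<le> z $ 2" by linarith
    qed
  qed
qed

lemma antipodal_equal_point:
  fixes g :: "real \<Rightarrow> real"
  assumes "continuous_on UNIV g" and "g (2*pi) = g 0"
  obtains t where "g t = g (t + pi)"
proof -
  define k where "k t = g t - g (t + pi)" for t
  have "continuous_on UNIV k"
    unfolding k_def
    by (intro continuous_on_diff assms(1) continuous_on_compose2[OF assms(1)] continuous_intros) auto
  moreover have "k pi = - k 0" using assms(2) by (simp add: k_def)
  ultimately obtain t where "k t = 0"
    using IVT'[of k 0 0 pi] IVT2'[of k pi 0 0] continuous_on_subset
    by (cases "k 0 \<le> 0") (fastforce simp: pi_ge_zero)+
  then show thesis using that by (simp add: k_def)
qed

lemma exists_int_2pi_shift:
  obtains n :: int where "s \<le> x + 2*pi * of_int n" "x + 2*pi * of_int n < s + 2*pi"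
proof -
  define n where "n = \<lceil>(s - x) / (2*pi)\<rceil>"
  have "(s - x) / (2*pi) \<le> of_int n" "of_int n < (s - x) / (2*pi) + 1"
    unfolding n_def by linarith+
  then have "s - x \<le> 2*pi * of_int n" "2*pi * of_int n < s - x + 2*pi"
    using pi_gt_zero by (simp_all add: divide_le_eq less_divide_eq field_simps)
  then show thesis by (intro that[of n]) auto
qed

lemma alternation_in_half_turn:
  fixes X :: "real \<Rightarrow> bool"
  assumes per: "\<And>t n. X (t + 2*pi * of_int n) = X t"
    and alt: "x1 < y1" "y1 < x2" "x2 < y2" "y2 < x1 + 2*pi"
    and "X x1" "\<not> X y1" "X x2" "\<not> X y2"
    and free: "\<And>w. s + pi < w \<Longrightarrow> w < s + 2*pi \<Longrightarrow> \<not> X w"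
  obtains b a b' where "s \<le> b" "b < a" "a < b'" "b' \<le> s + pi" "X b" "\<not> X a" "X b'"
proof -
  obtain n :: int where n: "s \<le> x1 + 2*pi * of_int n" "x1 + 2*pi * of_int n < s + 2*pi"
    using exists_int_2pi_shift .
  define c where "c = 2*pi * of_int n"
  have shift_c: "X (t + c) = X t" for t
    unfolding c_def using per by auto
  have shift_back: "X (t - 2*pi) = X t" for t
    using per[of t "-1"] by simp
  have "X (x1 + c)" "\<not> X (y1 + c)" "X (x2 + c)" "\<not> X (y2 + c)"
    using assms(6-9) shift_c by auto
  moreover have "x1 + c \<le> s + pi"
    using free[of "x1 + c"] \<open>X (x1 + c)\<close> n unfolding c_def by force
  ultimately show thesis
  proof (cases "x2 + c < s + 2*pi")
    case True
    then have "x2 + c \<le> s + pi" using free[of "x2 + c"] \<open>X (x2 + c)\<close> by force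
    then show thesis using n alt \<open>X (x1 + c)\<close> \<open>\<not> X (y1 + c)\<close> \<open>X (x2 + c)\<close>
      by (intro that[of "x1 + c" "y1 + c" "x2 + c"]) (auto simp: c_def)
  next
    case False
    have "X (x2 + c - 2*pi)" "\<not> X (y2 + c - 2*pi)"
      using shift_back \<open>X (x2 + c)\<close> \<open>\<not> X (y2 + c)\<close> by auto
    moreover have "x2 + c - 2*pi \<le> s + pi"
      using free[of "x2 + c - 2*pi"] \<open>X (x2 + c - 2*pi)\<close> alt n unfolding c_def[symmetric] by force
    ultimately show thesis using n alt \<open>X (x1 + c)\<close> \<open>x1 + c \<le> s + pi\<close> False
      by (intro that[of "x2 + c - 2*pi" "y2 + c - 2*pi" "x1 + c"]) (auto simp: c_def)
  qed
qed

lemma periodic_no_alternation: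
  fixes X :: "real \<Rightarrow> bool"
  assumes per: "\<And>t n. X (t + 2*pi * of_int n) = X t"
    and no_cross: "\<And>t u v. t < u \<Longrightarrow> u < t + pi \<Longrightarrow> t + pi < v \<Longrightarrow> v < t + 2*pi \<Longrightarrow>
      \<not> X t \<Longrightarrow> \<not> X (t + pi) \<Longrightarrow> X u \<Longrightarrow> X v \<Longrightarrow> False"
    and t0: "\<not> X t0" "\<not> X (t0 + pi)"
    and alt: "x1 < y1" "y1 < x2" "x2 < y2" "y2 < x1 + 2*pi"
    and "X x1" "\<not> X y1" "X x2" "\<not> X y2"
  shows False
proof -
  have shift_fwd: "X (t + 2*pi) = X t" and shift_back: "X (t - 2*pi) = X t" for t
    using per[of t 1] per[of t "-1"] by simp_all
  \<comment> \<open>One of the two half-turns starting at \<open>t0\<close> avoids \<open>X\<close>.\<close>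
  obtain s where free: "\<And>w. s + pi < w \<Longrightarrow> w < s + 2*pi \<Longrightarrow> \<not> X w"
  proof (cases "\<exists>u. t0 < u \<and> u < t0 + pi \<and> X u")
    case True
    then show thesis using no_cross[of t0 _] t0 by (intro that[of t0]) blast
  next
    case False
    have "\<not> X w" if "t0 + pi + pi < w" "w < t0 + pi + 2*pi" for w
      using False that shift_back[of w] by force
    then show thesis by (rule that)
  qed
  obtain b a b' where w: "s \<le> b" "b < a" "a < b'" "b' \<le> s + pi" "X b" "\<not> X a" "X b'"
    using alternation_in_half_turn[OF per alt assms(9-12) free] .
  show False
    using no_cross[of a b' "b + 2*pi"] w free[of "a + pi"] shift_fwd[of b] by auto
qed

lemma support_fun_no_alternation:
  fixes R S :: "(real^2) set"
  assumes cR: "compact R" and cS: "compact S" and neR: "R \<noteq> {}" and neS: "S \<noteq> {}"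
    and pR: "path_connected R" and pS: "path_connected S" and dj: "R \<inter> S = {}"
    and alt: "a1 < b1" "b1 < a2" "a2 < b2" "b2 < a1 + 2*pi"
    and ha: "support_fun S a1 < support_fun R a1" "support_fun S a2 < support_fun R a2"
    and hb: "support_fun R b1 \<le> support_fun S b1" "support_fun R b2 \<le> support_fun S b2"
  shows False
proof -
  define g where "g t = support_fun R t - support_fun S t" for t
  have g_per: "g (t + 2*pi * of_int n) = g t" for t n
    by (simp add: g_def support_fun_add_int_2pi)
  have "continuous_on UNIV g"
    unfolding g_def by (intro continuous_on_diff continuous_on_support_fun cR cS neR neS)
  moreover have "g (2*pi) = g 0" using g_per[of 0 1] by simp
  ultimately obtain t0 where t0: "g t0 = g (t0 + pi)" by (rule antipodal_equal_point)
  have g_signs: "g a1 > 0" "g b1 \<le> 0" "g a2 > 0" "g b2 \<le> 0" "g (a1 + 2*pi) > 0"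
    using ha hb g_per[of a1 1] by (auto simp: g_def)
  show False
  proof (cases "g t0 > 0")
    case True
    show False
    proof (rule periodic_no_alternation[of "\<lambda>t. g t \<le> 0" t0 b1 a2 b2 "a1 + 2*pi"])
      fix t u v
      assume "t < u" "u < t + pi" "t + pi < v" "v < t + 2*pi"
        "\<not> g t \<le> 0" "\<not> g (t + pi) \<le> 0" "g u \<le> 0" "g v \<le> 0"
      then show False
        using support_fun_crossing_impossible[OF cR cS neR neS pR pS dj, of t u v]
        by (auto simp: g_def)
    qed (use True t0 alt g_signs in \<open>auto simp: g_per\<close>)
  next
    case False
    show False
    proof (rule periodic_no_alternation[of "\<lambda>t. g t > 0" t0 a1 b1 a2 b2])
      fix t u v
      assume "t < u" "u < t + pi" "t + pi < v" "v < t + 2*pi"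
        "\<not> g t > 0" "\<not> g (t + pi) > 0" "g u > 0" "g v > 0"
      then show False
        using support_fun_crossing_impossible[OF cS cR neS neR pS pR _, of t u v] dj
        by (auto simp: g_def)
    qed (use False t0 alt g_signs in \<open>auto simp: g_per\<close>)
  qed
qed

lemma separating_dir:
  assumes "compact S" "S \<noteq> {}" "x \<notin> convex hull S"
  obtains t where "support_fun S t < x \<bullet> dir t"
proof -
  have "convex (convex hull S)" "closed (convex hull S)"
    using assms(1) by (simp_all add: compact_convex_hull compact_imp_closed)
  then obtain a b where ab: "a \<bullet> x < b" "\<forall>y\<in>convex hull S. a \<bullet> y > b"
    using separating_hyperplane_closed_point assms(3) by blast
  then have "a \<noteq> 0" using assms(2) hull_subset by fastforce
  obtain t where t: "-a = norm (-a) *\<^sub>R dir t"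
    using polar_dir[of "-a"] \<open>a \<noteq> 0\<close> by auto
  obtain y where y: "y \<in> S" "y \<bullet> dir t = support_fun S t"
    using support_fun_attained[OF assms(1,2)] .
  have "a \<bullet> x < a \<bullet> y" using ab y(1) hull_inc[of y S] by force
  then have "norm a * (y \<bullet> dir t) < norm a * (x \<bullet> dir t)"
    using arg_cong[OF t, of "\<lambda>v. v \<bullet> y"] arg_cong[OF t, of "\<lambda>v. v \<bullet> x"]
    by (simp add: inner_commute)
  then show thesis using y \<open>a \<noteq> 0\<close> by (intro that) simp
qed

definition cap :: "(real^2) set \<Rightarrow> (real^2) set \<Rightarrow> real \<Rightarrow> (real^2) set" where
  "cap R S t = {p \<in> convex hull R. support_fun S t < p \<bullet> dir t}"

lemma cap_subset_hull_diff: "compact S \<Longrightarrow> cap R S t \<subseteq> convex hull R - convex hull S"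
  using convex_hull_le_support_fun[of S _ t] by (force simp: cap_def)

lemma convex_cap: "convex (cap R S t)"
proof -
  have "cap R S t = convex hull R \<inter> {p. dir t \<bullet> p > support_fun S t}"
    by (auto simp: cap_def inner_commute)
  then show ?thesis by (simp add: convex_Int convex_halfspace_gt)
qed

lemma cap_add_int_2pi: "cap R S (t + 2*pi * of_int n) = cap R S t"
  by (simp add: cap_def support_fun_add_int_2pi dir_add_int_2pi)

lemma support_fun_less_if_in_cap:
  "compact R \<Longrightarrow> p \<in> cap R S t \<Longrightarrow> support_fun S t < support_fun R t"
  using convex_hull_le_support_fun[of R p t] by (auto simp: cap_def)

lemma hull_diff_covered_by_caps:
  assumes "compact S" "S \<noteq> {}" "x \<in> convex hull R - convex hull S"
  obtains t where "x \<in> cap R S t"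
proof -
  obtain t where "support_fun S t < x \<bullet> dir t"
    using separating_dir[OF assms(1,2)] assms(3) by blast
  then show thesis using assms(3) by (intro that[of t]) (simp add: cap_def)
qed

lemma connected_component_cap:
  "compact S \<Longrightarrow> p \<in> cap R S t \<Longrightarrow> q \<in> cap R S t
    \<Longrightarrow> connected_component (convex hull R - convex hull S) p q"
  unfolding connected_component_def
  using cap_subset_hull_diff convex_cap convex_connected by blast

lemma connected_component_caps_along_arc:
  fixes R S :: "(real^2) set"
  assumes cR: "compact R" and cS: "compact S" and neR: "R \<noteq> {}" and neS: "S \<noteq> {}"
    and "t1 \<le> t2" and pos: "\<forall>t\<in>{t1..t2}. support_fun S t < support_fun R t"
    and p: "p \<in> cap R S t1" and q: "q \<in> cap R S t2"
  shows "connected_component (convex hull R - convex hull S) p q"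
proof -
  let ?D = "convex hull R - convex hull S"
  have "\<forall>q\<in>cap R S t2. connected_component ?D p q"
  proof (rule connected_induction_simple[of "{t1..t2}" t1 t2 "\<lambda>t. \<forall>q\<in>cap R S t. connected_component ?D p q"])
    show "connected {t1..t2}" by simp
    show "t1 \<in> {t1..t2}" "t2 \<in> {t1..t2}" using \<open>t1 \<le> t2\<close> by auto
    show "\<forall>q\<in>cap R S t1. connected_component ?D p q"
      using p connected_component_cap[OF cS] by blast
    fix a assume a: "a \<in> {t1..t2}"
    \<comment> \<open>A point of \<open>R\<close> extreme in direction \<open>a\<close> lies in all caps of an open set of directions around \<open>a\<close>.\<close>
    obtain e where e: "e \<in> R" "e \<bullet> dir a = support_fun R a"
      using support_fun_attained[OF cR neR] .
    define N where "N = {s. support_fun S s < e \<bullet> dir s}"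
    have "open N" unfolding N_def
      by (intro open_Collect_less continuous_on_support_fun cS neS)
        (auto simp: inner_dir intro!: continuous_intros)
    have e_cap: "e \<in> cap R S s" if "s \<in> N" for s
      using that e(1) by (auto simp: cap_def N_def hull_inc)
    show "\<exists>T. openin (top_of_set {t1..t2}) T \<and> a \<in> T \<and>
        (\<forall>x\<in>T. \<forall>y\<in>T. (\<forall>q\<in>cap R S x. connected_component ?D p q) \<longrightarrow>
          (\<forall>q\<in>cap R S y. connected_component ?D p q))"
    proof (intro exI[of _ "{t1..t2} \<inter> N"] conjI ballI impI)
      show "openin (top_of_set {t1..t2}) ({t1..t2} \<inter> N)"
        using \<open>open N\<close> by (simp add: openin_open_Int)
      show "a \<in> {t1..t2} \<inter> N" using a pos e by (auto simp: N_def)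
      fix x y q assume "x \<in> {t1..t2} \<inter> N" "y \<in> {t1..t2} \<inter> N"
        and "\<forall>q\<in>cap R S x. connected_component ?D p q" and "q \<in> cap R S y"
      then show "connected_component ?D p q"
        using e_cap connected_component_cap[OF cS] connected_component_trans by blast
    qed
  qed
  then show ?thesis using q by blast
qed

lemma connected_convex_hull_diff:
  fixes R S :: "(real^2) set"
  assumes cR: "compact R" and cS: "compact S" and neR: "R \<noteq> {}" and neS: "S \<noteq> {}"
    and pR: "path_connected R" and pS: "path_connected S" and dj: "R \<inter> S = {}"
  shows "connected (convex hull R - convex hull S)"
  unfolding connected_iff_connected_component
proof (intro ballI)
  let ?D = "convex hull R - convex hull S"
  let ?positive_on = "\<lambda>a b. \<forall>t\<in>{a..b}. support_fun S t < support_fun R t"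
  fix x y assume "x \<in> ?D" "y \<in> ?D"
  then obtain t1 t2' where x: "x \<in> cap R S t1" and "y \<in> cap R S t2'"
    using hull_diff_covered_by_caps[OF cS neS] by metis
  obtain n :: int where n: "t1 \<le> t2' + 2*pi * of_int n" "t2' + 2*pi * of_int n < t1 + 2*pi"
    using exists_int_2pi_shift .
  define t2 where "t2 = t2' + 2*pi * of_int n"
  have y: "y \<in> cap R S t2" using \<open>y \<in> cap R S t2'\<close> by (simp add: t2_def cap_add_int_2pi)
  have x': "x \<in> cap R S (t1 + 2*pi)" using x cap_add_int_2pi[of R S t1 1] by simp
  have pos1: "support_fun S t1 < support_fun R t1" and pos2: "support_fun S t2 < support_fun R t2"
    using x y support_fun_less_if_in_cap[OF cR] by blast+
  \<comment> \<open>Otherwise the sign of \<open>support_fun R - support_fun S\<close> would change four times.\<close>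
  have "?positive_on t1 t2 \<or> ?positive_on t2 (t1 + 2*pi)"
  proof (rule ccontr)
    assume "\<not> ?thesis"
    then obtain b1 b2 where b1: "t1 \<le> b1" "b1 \<le> t2" "support_fun R b1 \<le> support_fun S b1"
      and b2: "t2 \<le> b2" "b2 \<le> t1 + 2*pi" "support_fun R b2 \<le> support_fun S b2"
      by (auto simp: not_less)
    have "b2 \<noteq> t1 + 2*pi" using b2 pos1 support_fun_add_2pi[of _ t1] by auto
    then show False
      using support_fun_no_alternation[OF cR cS neR neS pR pS dj, of t1 b1 t2 b2]
        b1 b2 pos1 pos2 by fastforce
  qed
  then show "connected_component ?D x y"
  proof
    assume "?positive_on t1 t2"
    then show ?thesis
      using connected_component_caps_along_arc[OF cR cS neR neS _ _ x y] n by (simp add: t2_def)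
  next
    assume "?positive_on t2 (t1 + 2*pi)"
    then have "connected_component ?D y x"
      using connected_component_caps_along_arc[OF cR cS neR neS _ _ y x'] n by (simp add: t2_def)
    then show ?thesis by (rule connected_component_sym)
  qed
qed

lemma is_tree_edges_subset_Pow: "is_tree V E \<Longrightarrow> E \<subseteq> Pow V"
  by (auto simp: is_tree_def)

lemma compact_tree_points:
  assumes "is_tree V E"
  shows "compact (tree_points V E)"
proof -
  have "finite V" using assms by (simp add: is_tree_def)
  moreover have "E \<subseteq> Pow V" using assms by (rule is_tree_edges_subset_Pow)
  ultimately have "finite E" "\<forall>e\<in>E. finite e"
    by (auto intro: finite_subset)
  then show ?thesis
    unfolding tree_points_def
    using \<open>finite V\<close> by (intro compact_Un finite_imp_compact compact_UN compact_convex_hull) auto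
qed

lemma tree_points_nonempty: "is_tree V E \<Longrightarrow> tree_points V E \<noteq> {}"
  by (auto simp: is_tree_def tree_points_def)

lemma path_connected_tree_points:
  assumes "is_tree V E"
  shows "path_connected (tree_points V E)"
  unfolding path_connected_component
proof (intro ballI)
  let ?T = "tree_points V E"
  have edges: "E \<subseteq> {{a,b} | a b. a \<in> V \<and> b \<in> V \<and> a \<noteq> b}" and "graph_connected V E"
    using assms by (auto simp: is_tree_def)
  have "V \<subseteq> ?T" by (auto simp: tree_points_def)
  have seg: "closed_segment a b \<subseteq> ?T" if "{a,b} \<in> E" for a b
    using that by (auto simp: tree_points_def segment_convex_hull)
  have walk: "path_component ?T a b" if "a \<in> V" "(a,b) \<in> (edge_rel E)\<^sup>*" for a b
    using that(2)
  proof (induction rule: rtrancl_induct)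
    case base then show ?case using that(1) \<open>V \<subseteq> ?T\<close> by (auto intro: path_component_refl)
  next
    case (step y z)
    then have "path_component ?T y z"
      using seg by (intro path_component_linepath) (auto simp: edge_rel_def)
    then show ?case using step.IH by (rule path_component_trans[rotated])
  qed
  have to_vertex: "\<exists>v\<in>V. path_component ?T x v" if x: "x \<in> ?T" for x
  proof (cases "x \<in> V")
    case True then show ?thesis using \<open>V \<subseteq> ?T\<close> by (auto intro: path_component_refl)
  next
    case False
    then obtain a b where ab: "{a,b} \<in> E" "a \<in> V" "x \<in> closed_segment a b"
      using x edges by (auto simp: tree_points_def segment_convex_hull)
    then have "closed_segment x a \<subseteq> closed_segment a b"
      by (simp add: closed_segment_subset convex_closed_segment)
    then have "path_component ?T x a" using seg[OF ab(1)] by (intro path_component_linepath) auto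
    then show ?thesis using ab by blast
  qed
  fix x y assume "x \<in> ?T" "y \<in> ?T"
  then obtain v w where "v \<in> V" "path_component ?T x v" "w \<in> V" "path_component ?T y w"
    using to_vertex by blast
  moreover have "path_component ?T v w"
    using walk \<open>graph_connected V E\<close> \<open>v \<in> V\<close> \<open>w \<in> V\<close> by (auto simp: graph_connected_def)
  ultimately show "path_component ?T x y"
    by (meson path_component_sym path_component_trans)
qed

theorem lemma4:
  fixes VR VS :: "pt set" and ER ES :: "pt set set"
  assumes "geometric_tree VR ER" and "geometric_tree VS ES"
    and "tree_points VR ER \<inter> tree_points VS ES = {}"
    and "general_position (VR \<union> VS)"
  shows "weakly_disjoint_pair (convex hull (tree_points VR ER)) (convex hull (tree_points VS ES))"
proof -
  let ?R = "tree_points VR ER" and ?S = "tree_points VS ES"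
  have trees: "is_tree VR ER" "is_tree VS ES"
    using assms(1,2) by (simp_all add: geometric_tree_def)
  note R = compact_tree_points[OF trees(1)] tree_points_nonempty[OF trees(1)]
    path_connected_tree_points[OF trees(1)]
  note S = compact_tree_points[OF trees(2)] tree_points_nonempty[OF trees(2)]
    path_connected_tree_points[OF trees(2)]
  have "connected (convex hull ?R - convex hull ?S)"
    using connected_convex_hull_diff[OF R(1) S(1) R(2) S(2) R(3) S(3) assms(3)] .
  moreover have "connected (convex hull ?S - convex hull ?R)"
    using connected_convex_hull_diff[OF S(1) R(1) S(2) R(2) S(3) R(3)] assms(3) by blast
  moreover have "\<not> (\<exists>v. v extreme_point_of convex hull ?R \<and> v extreme_point_of convex hull ?S)"
    using extreme_point_of_convex_hull assms(3) by blast
  ultimately show ?thesis unfolding weakly_disjoint_pair_def by blast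
qed

end
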